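(* Let $1\le k\le n-2$, let $X[k]$, $V_1$, $\overline{V_1}$ be as described below, and let $\mathcal{G}$ be the graph with vertex set $\overline{V_1}$ in which distinct $u,v$ are adjacent iff some $w\in V_1$ is adjacent in $X[k]$ to both $u$ and $v$. Then $\mathcal{G}$ is isomorphic to the partial permutation graph $P(k,n-1)$; moreover, for each $w\in V_1$, the neighbors of $w$ in $\overline{V_1}$ form a maximal clique of $\mathcal{G}$ of size $n-k$.
   Context: $T_n=\{(1\,2),\dots,(1\,n)\}$. $X[k]$ is the multigraph whose vertices are the $k$-tuples of pairwise distinct elements of $[n]$, with, for each vertex $(i_1,\dots,i_k)$ and each $t\in T_n$, an edge joining it to $(t(i_1),\dots,t(i_k))$ (a loop if equal). $V_1$ is the set of vertices having $1$ as an entry, $\overline{V_1}$ the rest. For integers $1\le d\le m$, the partial permutation graph $P(d,m)$ has as vertices all $d$-tuples with pairwise distinct entries from $[m]$ (here identified with $\{2,\dots,n\}$ when $m=n-1$), two adjacent iff they differ in exactly one coordinate. *)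

theory Defs
  imports "HOL-Combinatorics.Transposition"
begin

definition tuples :: "nat \<Rightarrow> nat set \<Rightarrow> nat list set" where
  "tuples k S = {xs. length xs = k \<and> distinct xs \<and> set xs \<subseteq> S}"

definition XV :: "nat \<Rightarrow> nat \<Rightarrow> nat list set" where
  "XV n k = tuples k {1..n}"

text \<open>Adjacency in X[k]: there is an edge labelled by some t = (1 j), 2 \<le> j \<le> n,
  joining u to the componentwise image of u under t.\<close>
definition XAdj :: "nat \<Rightarrow> nat list \<Rightarrow> nat list \<Rightarrow> bool" where
  "XAdj n u v \<longleftrightarrow> (\<exists>j\<in>{2..n}. v = map (transpose 1 j) u)"

definition V1 :: "nat \<Rightarrow> nat \<Rightarrow> nat list set" where
  "V1 n k = {u \<in> XV n k. 1 \<in> set u}"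

definition V1bar :: "nat \<Rightarrow> nat \<Rightarrow> nat list set" where
  "V1bar n k = {u \<in> XV n k. 1 \<notin> set u}"

definition GAdj :: "nat \<Rightarrow> nat \<Rightarrow> nat list \<Rightarrow> nat list \<Rightarrow> bool" where
  "GAdj n k u v \<longleftrightarrow> u \<noteq> v \<and> (\<exists>w\<in>V1 n k. XAdj n w u \<and> XAdj n w v)"

text \<open>Partial permutation graph P(d,m): d-tuples of distinct entries of S (|S| = m),
  adjacent iff they differ in exactly one coordinate.\<close>
definition PV :: "nat \<Rightarrow> nat set \<Rightarrow> nat list set" where
  "PV d S = tuples d S"

definition PAdj :: "nat list \<Rightarrow> nat list \<Rightarrow> bool" where
  "PAdj xs ys \<longleftrightarrow> card {i. i < length xs \<and> xs ! i \<noteq> ys ! i} = 1"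

definition graph_iso :: "'a set \<Rightarrow> ('a \<Rightarrow> 'a \<Rightarrow> bool) \<Rightarrow> 'b set \<Rightarrow> ('b \<Rightarrow> 'b \<Rightarrow> bool) \<Rightarrow> bool" where
  "graph_iso V E V' E' \<longleftrightarrow> (\<exists>f. bij_betw f V V' \<and> (\<forall>u\<in>V. \<forall>v\<in>V. E u v \<longleftrightarrow> E' (f u) (f v)))"

definition is_clique :: "'a set \<Rightarrow> ('a \<Rightarrow> 'a \<Rightarrow> bool) \<Rightarrow> 'a set \<Rightarrow> bool" where
  "is_clique V E K \<longleftrightarrow> K \<subseteq> V \<and> (\<forall>u\<in>K. \<forall>v\<in>K. u \<noteq> v \<longrightarrow> E u v)"

definition is_maximal_clique :: "'a set \<Rightarrow> ('a \<Rightarrow> 'a \<Rightarrow> bool) \<Rightarrow> 'a set \<Rightarrow> bool" where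
  "is_maximal_clique V E K \<longleftrightarrow> is_clique V E K \<and> (\<forall>K'. is_clique V E K' \<and> K \<subseteq> K' \<longrightarrow> K' = K)"

end

theory Submission
  imports Defs
begin

(*
  The graph G on the vertices of X[k] avoiding 1 is the Hamming graph of the
  k-tuples: two vertices u, v of V1bar have a common X[k]-neighbour w in V1 iff
  they differ in exactly one coordinate.  Indeed, if w has its entry 1 at
  position p, then the X[k]-neighbours of w outside V1 are exactly the tuples
  obtained from w by replacing that 1 by an entry j in {2..n} not occurring in
  w, i.e. the tuples in V1bar agreeing with w off coordinate p.
*)

definition agree_off :: "nat \<Rightarrow> 'a list \<Rightarrow> 'a list \<Rightarrow> bool" where
  "agree_off p u v \<longleftrightarrow> length u = length v \<and> (\<forall>i<length u. i \<noteq> p \<longrightarrow> u ! i = v ! i)"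

lemma agree_off_sym: "agree_off p u v \<Longrightarrow> agree_off p v u"
  by (auto simp: agree_off_def)

lemma agree_off_trans: "agree_off p u v \<Longrightarrow> agree_off p v w \<Longrightarrow> agree_off p u w"
  by (auto simp: agree_off_def)

lemma agree_off_update: "agree_off p (w[p := x]) w"
  by (auto simp: agree_off_def)

lemma agree_off_eq_update:
  assumes "agree_off p u w" "p < length w"
  shows "u = w[p := u ! p]"
  using assms by (intro nth_equalityI) (auto simp: agree_off_def nth_list_update)

lemma PAdj_iff_agree_off:
  assumes "length u = length v"
  shows "PAdj u v \<longleftrightarrow> u \<noteq> v \<and> (\<exists>p<length u. agree_off p u v)"
proof
  assume "PAdj u v"
  then obtain p where D: "{i. i < length u \<and> u ! i \<noteq> v ! i} = {p}"
    unfolding PAdj_def by (rule card_1_singletonE)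
  then have "p < length u" "u ! p \<noteq> v ! p" "agree_off p u v"
    using assms by (auto simp: agree_off_def)
  then show "u \<noteq> v \<and> (\<exists>p<length u. agree_off p u v)" by auto
next
  assume "u \<noteq> v \<and> (\<exists>p<length u. agree_off p u v)"
  then obtain p where uv: "u \<noteq> v" and p: "p < length u" "agree_off p u v" by blast
  have "u ! p \<noteq> v ! p"
  proof
    assume "u ! p = v ! p"
    with p have "u = v" by (intro nth_equalityI) (auto simp: agree_off_def)
    with uv show False ..
  qed
  with p have "{i. i < length u \<and> u ! i \<noteq> v ! i} = {p}" by (auto simp: agree_off_def)
  then show "PAdj u v" by (simp add: PAdj_def)
qed

lemma PAdj_map:
  assumes "length u = length v" and "inj_on f (set u \<union> set v)"
  shows "PAdj (map f u) (map f v) \<longleftrightarrow> PAdj u v"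
proof -
  have "f (u ! i) \<noteq> f (v ! i) \<longleftrightarrow> u ! i \<noteq> v ! i" if "i < length u" for i
    using that assms inj_on_eq_iff[OF assms(2)] by simp
  then have "{i. i < length u \<and> map f u ! i \<noteq> map f v ! i}
           = {i. i < length u \<and> u ! i \<noteq> v ! i}"
    using assms(1) by auto
  then show ?thesis by (simp add: PAdj_def)
qed

lemma agree_off_line:
  assumes a: "agree_off p a w" and b: "agree_off p b w" and ab: "a \<noteq> b"
    and ua: "agree_off q u a" and ub: "agree_off r u b"
  shows "agree_off p u w"
proof -
  have "q = p \<or> r = p"
  proof (rule ccontr)
    assume qr: "\<not> (q = p \<or> r = p)"
    have "a = b"
    proof (rule nth_equalityI)
      show "length a = length b" using a b by (simp add: agree_off_def)
      fix i assume "i < length a"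
      then show "a ! i = b ! i"
        using a b ua ub qr by (cases "i = p") (auto simp: agree_off_def)
    qed
    with ab show False ..
  qed
  then show ?thesis
    using a b ua ub agree_off_trans by blast
qed

lemma tuples_map_bij:
  assumes "bij_betw f A B"
  shows "bij_betw (map f) (tuples k A) (tuples k B)"
proof (rule bij_betw_byWitness[where f' = "map (inv_into A f)"])
  have inj: "inj_on f A" and img: "f ` A = B" using assms by (auto simp: bij_betw_def)
  show "\<forall>xs\<in>tuples k A. map (inv_into A f) (map f xs) = xs"
    using inj by (auto simp: tuples_def intro!: map_idI)
  show "\<forall>ys\<in>tuples k B. map f (map (inv_into A f) ys) = ys"
    using img by (auto simp: tuples_def subset_iff f_inv_into_f intro: map_idI)
  show "map f ` tuples k A \<subseteq> tuples k B"
    using inj img by (fastforce simp: tuples_def distinct_map inj_on_subset)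
  have "inj_on (inv_into A f) B" using inj_on_inv_into img by blast
  then show "map (inv_into A f) ` tuples k B \<subseteq> tuples k A"
    using img by (auto simp: tuples_def distinct_map inj_on_subset subset_iff intro!: inv_into_into)
qed

lemma V1bar_eq: "V1bar n k = tuples k {2..n}"
proof -
  have "{2..n} = {1..n} - {1::nat}" by auto
  then show ?thesis unfolding V1bar_def XV_def tuples_def by blast
qed

lemma V1_iff: "w \<in> V1 n k \<longleftrightarrow> length w = k \<and> distinct w \<and> set w \<subseteq> {1..n} \<and> 1 \<in> set w"
  unfolding V1_def XV_def tuples_def by auto

lemma map_transpose_eq_update:
  assumes "distinct w" "p < length w" "w ! p = a" "j \<notin> set w"
  shows "map (transpose a j) w = w[p := j]"
proof (rule nth_equalityI)
  fix i assume i: "i < length (map (transpose a j) w)"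
  show "map (transpose a j) w ! i = w[p := j] ! i"
  proof (cases "i = p")
    case False
    then have "w ! i \<noteq> a" using assms i by (metis length_map nth_eq_iff_index_eq)
    moreover have "w ! i \<noteq> j" using assms(4) i by (metis length_map nth_mem)
    ultimately show ?thesis using False i by simp
  qed (use assms in simp)
qed simp

lemma neighbours_V1bar_image:
  assumes w: "w \<in> V1 n k" and p: "p < k" "w ! p = 1"
  shows "{u \<in> V1bar n k. XAdj n w u} = (\<lambda>j. w[p := j]) ` ({2..n} - set w)"
proof -
  have lw: "length w = k" "distinct w" "set w \<subseteq> {1..n}" using w by (auto simp: V1_iff)
  have XAdj_update: "XAdj n w (w[p := j])" if "j \<in> {2..n} - set w" for j
    unfolding XAdj_def
    using that map_transpose_eq_update[OF lw(2) _ p(2), of j] lw p by (intro bexI[of _ j]) auto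
  show ?thesis
  proof (intro equalityI subsetI)
    fix u assume "u \<in> {u \<in> V1bar n k. XAdj n w u}"
    then obtain j where u: "u \<in> V1bar n k" and j: "j \<in> {2..n}" and ue: "u = map (transpose 1 j) w"
      unfolding XAdj_def by blast
    have "j \<notin> set w"
    proof
      assume "j \<in> set w"
      then have "1 \<in> set u"
        using ue by (metis image_eqI list.set_map transpose_apply_second)
      then show False using u by (simp add: V1bar_def)
    qed
    with ue j show "u \<in> (\<lambda>j. w[p := j]) ` ({2..n} - set w)"
      using map_transpose_eq_update[OF lw(2) _ p(2)] lw p by auto
  next
    fix u assume "u \<in> (\<lambda>j. w[p := j]) ` ({2..n} - set w)"
    then obtain j where j: "j \<in> {2..n} - set w" and ue: "u = w[p := j]" by blast
    have "set u = insert j (set w - {1})"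
      using set_update_distinct[OF lw(2), of p j] lw p ue by simp
    then have "u \<in> tuples k {2..n}"
      using lw j ue by (auto simp: tuples_def intro!: distinct_list_update)
    then show "u \<in> {u \<in> V1bar n k. XAdj n w u}"
      using XAdj_update[OF j] ue by (simp add: V1bar_eq)
  qed
qed

lemma XAdj_iff_agree_off:
  assumes w: "w \<in> V1 n k" and p: "p < k" "w ! p = 1" and u: "u \<in> V1bar n k"
  shows "XAdj n w u \<longleftrightarrow> agree_off p u w"
proof -
  have lw: "length w = k" "distinct w" using w by (auto simp: V1_iff)
  have lu: "length u = k" "distinct u" "set u \<subseteq> {2..n}" using u by (auto simp: V1bar_eq tuples_def)
  have "u \<in> (\<lambda>j. w[p := j]) ` ({2..n} - set w) \<longleftrightarrow> agree_off p u w"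
  proof
    assume "agree_off p u w"
    then have ue: "u = w[p := u ! p]" using agree_off_eq_update[of p u w] lw p by simp
    have up: "u ! p \<in> {2..n}" using lu(1,3) p(1) nth_mem by blast
    have "u ! p \<notin> set w"
    proof
      assume "u ! p \<in> set w"
      then obtain i where i: "i < k" "w ! i = u ! p" using lw by (metis in_set_conv_nth)
      moreover have "i \<noteq> p" using i p up by auto
      ultimately have "u ! i = u ! p" using ue lw by (metis nth_list_update_neq)
      then show False using lu i p \<open>i \<noteq> p\<close> by (metis nth_eq_iff_index_eq)
    qed
    with ue up show "u \<in> (\<lambda>j. w[p := j]) ` ({2..n} - set w)" by blast
  qed (auto simp: agree_off_update)
  then show ?thesis using neighbours_V1bar_image[OF w p] u by blast
qed

text \<open>Two vertices of V1bar have a common neighbour in V1 iff they are at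
  Hamming distance one: the common neighbour is obtained by writing 1 into
  the coordinate where they differ.\<close>
lemma GAdj_iff_PAdj:
  assumes u: "u \<in> V1bar n k" and v: "v \<in> V1bar n k"
  shows "GAdj n k u v \<longleftrightarrow> PAdj u v"
proof -
  have lu: "length u = k" "distinct u" "set u \<subseteq> {2..n}" using u by (auto simp: V1bar_eq tuples_def)
  have lv: "length v = k" using v by (auto simp: V1bar_eq tuples_def)
  have "GAdj n k u v \<longleftrightarrow> u \<noteq> v \<and> (\<exists>p<k. agree_off p u v)"
  proof
    assume "GAdj n k u v"
    then obtain w where uv: "u \<noteq> v" and w: "w \<in> V1 n k" "XAdj n w u" "XAdj n w v"
      unfolding GAdj_def by blast
    then obtain p where p: "p < k" "w ! p = 1" by (metis V1_iff in_set_conv_nth)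
    have "agree_off p u w" "agree_off p v w"
      using w XAdj_iff_agree_off[OF w(1) p] u v by auto
    then show "u \<noteq> v \<and> (\<exists>p<k. agree_off p u v)"
      using uv p agree_off_sym agree_off_trans by blast
  next
    assume "u \<noteq> v \<and> (\<exists>p<k. agree_off p u v)"
    then obtain p where uv: "u \<noteq> v" and p: "p < k" and vu: "agree_off p v u"
      using agree_off_sym by blast
    define w where "w = u[p := 1]"
    have "u ! p \<in> {2..n}" using lu(1,3) p nth_mem by blast
    then have "w \<in> V1 n k"
      using lu p set_update_distinct[OF lu(2), of p 1]
      by (auto simp: w_def V1_iff intro!: distinct_list_update)
    moreover have wp: "w ! p = 1" using lu p by (simp add: w_def)
    moreover have "agree_off p u w" using agree_off_sym[OF agree_off_update] by (simp add: w_def)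
    moreover have "agree_off p v w" using agree_off_trans[OF vu] calculation(3) .
    ultimately show "GAdj n k u v"
      unfolding GAdj_def using uv p XAdj_iff_agree_off u v by blast
  qed
  then show ?thesis using PAdj_iff_agree_off lu lv by simp
qed

text \<open>Hence \<G> is isomorphic to P(k, n - 1), via the relabelling x \<mapsto> x - 1.\<close>
lemma G_iso_partial_permutation_graph:
  "graph_iso (V1bar n k) (GAdj n k) (PV k {1..n-1}) PAdj"
proof -
  have relabel: "bij_betw (\<lambda>x::nat. x - 1) {2..n} {1..n - 1}"
    by (rule bij_betw_byWitness[where f' = Suc]) auto
  have bij: "bij_betw (map (\<lambda>x. x - 1)) (V1bar n k) (PV k {1..n-1})"
    unfolding V1bar_eq PV_def by (rule tuples_map_bij[OF relabel])
  have "GAdj n k u v \<longleftrightarrow> PAdj (map (\<lambda>x. x - 1) u) (map (\<lambda>x. x - 1) v)"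
    if u: "u \<in> V1bar n k" and v: "v \<in> V1bar n k" for u v
  proof -
    have "length u = length v" "set u \<union> set v \<subseteq> {2..n}"
      using u v by (auto simp: V1bar_eq tuples_def)
    then show ?thesis
      using GAdj_iff_PAdj[OF u v] PAdj_map inj_on_subset[OF bij_betw_imp_inj_on[OF relabel]]
      by metis
  qed
  with bij show ?thesis unfolding graph_iso_def by blast
qed

text \<open>The n - k values j \<in> {2..n} - set w give distinct neighbours w[p := j].\<close>
lemma card_neighbours_V1bar:
  assumes w: "w \<in> V1 n k"
  shows "card {u \<in> V1bar n k. XAdj n w u} = n - k"
proof -
  have lw: "length w = k" "distinct w" "set w \<subseteq> {1..n}" "1 \<in> set w"
    using w by (auto simp: V1_iff)
  then obtain p where p: "p < k" "w ! p = 1" by (metis in_set_conv_nth)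
  have inj: "inj_on (\<lambda>j. w[p := j]) ({2..n} - set w)"
    by (rule inj_onI) (metis lw(1) p(1) nth_list_update_eq)
  have "{2..n} \<inter> set w = set w - {1}" using lw(3) by auto
  then have "card ({2..n} \<inter> set w) = k - 1"
    using lw distinct_card[of w] by simp
  moreover have "k \<ge> 1" using p by simp
  ultimately have "card ({2..n} - set w) = n - k"
    using card_Diff_subset_Int[of "{2..n}" "set w"] by simp
  then show ?thesis
    unfolding neighbours_V1bar_image[OF w p] card_image[OF inj] .
qed

text \<open>The neighbourhood of w is a clique of \<G> by definition; when it has at
  least two points it is maximal, since a vertex adjacent to two of its points
  agrees with w off the coordinate of the entry 1.\<close>
lemma neighbours_maximal_clique:
  assumes w: "w \<in> V1 n k" and two: "2 \<le> card {u \<in> V1bar n k. XAdj n w u}"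
  shows "is_maximal_clique (V1bar n k) (GAdj n k) {u \<in> V1bar n k. XAdj n w u}"
proof -
  define N where "N = {u \<in> V1bar n k. XAdj n w u}"
  obtain p where p: "p < k" "w ! p = 1"
    using w by (metis V1_iff in_set_conv_nth)
  have N_eq: "N = {u \<in> V1bar n k. agree_off p u w}"
    unfolding N_def using XAdj_iff_agree_off[OF w p] by blast
  have "finite N" using two by (simp add: N_def card_ge_0_finite)
  then obtain a b where a: "a \<in> N" and b: "b \<in> N" and ab: "a \<noteq> b"
    using two card_le_Suc0_iff_eq[of N] unfolding N_def by fastforce
  have clique: "is_clique (V1bar n k) (GAdj n k) N"
    unfolding is_clique_def GAdj_def N_def using w by blast
  have "u \<in> N" if K: "is_clique (V1bar n k) (GAdj n k) K" "N \<subseteq> K" and uK: "u \<in> K" for K u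
  proof (rule ccontr)
    assume uN: "u \<notin> N"
    have u: "u \<in> V1bar n k" using K uK by (auto simp: is_clique_def)
    have "\<exists>q. agree_off q u c" if c: "c \<in> N" for c
    proof -
      have "u \<noteq> c" "c \<in> K" using uN c K(2) by auto
      then have "GAdj n k u c" using K(1) uK by (simp add: is_clique_def)
      moreover have cV: "c \<in> V1bar n k" using c by (simp add: N_def)
      moreover have "length u = length c" using u cV by (simp add: V1bar_eq tuples_def)
      ultimately show ?thesis using GAdj_iff_PAdj[OF u] PAdj_iff_agree_off by blast
    qed
    then obtain q r where "agree_off q u a" "agree_off r u b" using a b by blast
    then have "agree_off p u w"
      using agree_off_line a b ab by (auto simp: N_eq)
    with u uN show False by (simp add: N_eq)
  qed
  with clique show ?thesis
    unfolding is_maximal_clique_def N_def[symmetric] by blast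
qed

theorem mainTheorem9:
  fixes n k :: nat
  assumes "1 \<le> k" and "k + 2 \<le> n"
  shows "graph_iso (V1bar n k) (GAdj n k) (PV k {1..n-1}) PAdj
    \<and> (\<forall>w\<in>V1 n k.
         is_maximal_clique (V1bar n k) (GAdj n k) {u \<in> V1bar n k. XAdj n w u}
       \<and> card {u \<in> V1bar n k. XAdj n w u} = n - k)"
proof (intro conjI ballI G_iso_partial_permutation_graph)
  fix w assume w: "w \<in> V1 n k"
  show card: "card {u \<in> V1bar n k. XAdj n w u} = n - k"
    using card_neighbours_V1bar[OF w] .
  show "is_maximal_clique (V1bar n k) (GAdj n k) {u \<in> V1bar n k. XAdj n w u}"
    using neighbours_maximal_clique[OF w] card assms(2) by simp
qed

end
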